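(* Let $G$ be a graph and let $p\ge 2$ be an integer. Then $\mathrm{id}^{\leq p}(G)\leq \frac{|E(G)|}{\lfloor p/2\rfloor}+\chi'_s(G)$.
   Context: A matching $M$ of $G$ is induced if every edge of $G$ joining two endvertices of edges of $M$ belongs to $M$. A strong edge-colouring of $G$ is an edge-colouring in which each colour class is an induced matching; $\chi'_s(G)$ (the strong chromatic index) is the minimum number of colours in a strong edge-colouring of $G$. For an oriented graph $D$ and $X\subseteq V(D)$, the inversion of $X$ reverses every arc with both endvertices in $X$; a $(\leq p)$-inversion is the inversion of a set of at most $p$ vertices. $\mathrm{id}^{\leq p}(G)$ is the maximum, over all ordered pairs $(\vec G_1,\vec G_2)$ of orientations of $G$, of the minimum number of $(\leq p)$-inversions transforming $\vec G_1$ into $\vec G_2$. *)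

theory Defs
  imports Complex_Main
begin

definition sgraph :: "'a set \<Rightarrow> 'a set set \<Rightarrow> bool" where
  "sgraph V E \<longleftrightarrow> finite V \<and> (\<forall>e\<in>E. \<exists>u v. e = {u, v} \<and> u \<noteq> v \<and> u \<in> V \<and> v \<in> V)"

definition orientation :: "'a set \<Rightarrow> 'a set set \<Rightarrow> ('a \<times> 'a) set \<Rightarrow> bool" where
  "orientation V E D \<longleftrightarrow>
     (\<forall>(u, v)\<in>D. {u, v} \<in> E) \<and>
     (\<forall>u v. {u, v} \<in> E \<longrightarrow> ((u, v) \<in> D \<longleftrightarrow> (v, u) \<notin> D))"

definition invert :: "'a set \<Rightarrow> ('a \<times> 'a) set \<Rightarrow> ('a \<times> 'a) set" where
  "invert X D = {(u, v). (u, v) \<in> D \<and> \<not> (u \<in> X \<and> v \<in> X)}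
              \<union> {(v, u) | u v. (u, v) \<in> D \<and> u \<in> X \<and> v \<in> X}"

definition invert_seq :: "'a set list \<Rightarrow> ('a \<times> 'a) set \<Rightarrow> ('a \<times> 'a) set" where
  "invert_seq Xs D = foldl (\<lambda>D' X. invert X D') D Xs"

definition inv_dist :: "nat \<Rightarrow> 'a set \<Rightarrow> ('a \<times> 'a) set \<Rightarrow> ('a \<times> 'a) set \<Rightarrow> nat" where
  "inv_dist p V D1 D2 = (LEAST k. \<exists>Xs. length Xs = k \<and>
      (\<forall>X\<in>set Xs. X \<subseteq> V \<and> card X \<le> p) \<and> invert_seq Xs D1 = D2)"

definition inv_diam :: "nat \<Rightarrow> 'a set \<Rightarrow> 'a set set \<Rightarrow> nat" where
  "inv_diam p V E = Max {inv_dist p V D1 D2 | D1 D2. orientation V E D1 \<and> orientation V E D2}"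

definition induced_matching :: "'a set set \<Rightarrow> 'a set set \<Rightarrow> bool" where
  "induced_matching E M \<longleftrightarrow> M \<subseteq> E \<and>
     (\<forall>e\<in>M. \<forall>f\<in>M. e \<noteq> f \<longrightarrow> e \<inter> f = {}) \<and>
     (\<forall>e\<in>E. e \<subseteq> \<Union>M \<longrightarrow> e \<in> M)"

definition strong_edge_colouring :: "'a set set \<Rightarrow> nat \<Rightarrow> ('a set \<Rightarrow> nat) \<Rightarrow> bool" where
  "strong_edge_colouring E k c \<longleftrightarrow> (\<forall>e\<in>E. c e < k) \<and>
     (\<forall>i<k. induced_matching E {e \<in> E. c e = i})"

definition strong_chromatic_index :: "'a set set \<Rightarrow> nat" where
  "strong_chromatic_index E = (LEAST k. \<exists>c. strong_edge_colouring E k c)"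

end

(*
  Let F be the set of edges on which the two orientations disagree; reversing exactly the
  arcs of F turns one orientation into the other. A strong edge-colouring with k colours
  splits F into k induced matchings, and each of them is cut into blocks of at most
  q = floor(p/2) edges. A block M is again an induced matching, so the only edges spanned
  by its at most 2q <= p endvertices are those of M, and inverting this vertex set reverses
  exactly the arcs of M. A class with m edges is cut into at most m/q + 1 blocks, so in
  total at most |F|/q + k <= |E|/q + k inversions are used.
*)

theory Submission
  imports Defs
begin

lemma sgraph_finite_edges: "sgraph V E \<Longrightarrow> finite E"
  unfolding sgraph_def by (rule finite_subset[of E "Pow V"]) auto

lemma sgraph_edgeE:
  assumes "sgraph V E" "e \<in> E"
  obtains u v where "e = {u, v}" "u \<noteq> v" "u \<in> V" "v \<in> V"
  using assms unfolding sgraph_def by blast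

lemma sgraph_edge_subset: "sgraph V E \<Longrightarrow> e \<in> E \<Longrightarrow> e \<subseteq> V"
  by (elim sgraph_edgeE) auto

lemma sgraph_card_edge: "sgraph V E \<Longrightarrow> e \<in> E \<Longrightarrow> card e = 2"
  by (elim sgraph_edgeE) auto

lemma sgraph_Union_edges: "sgraph V E \<Longrightarrow> M \<subseteq> E \<Longrightarrow> \<Union>M \<subseteq> V"
  using sgraph_edge_subset by blast

lemma sgraph_card_Union_edges:
  assumes "sgraph V E" "M \<subseteq> E"
  shows "card (\<Union>M) \<le> 2 * card M"
proof -
  have "card e \<le> 2" if "e \<in> M" for e
    using sgraph_card_edge[OF assms(1)] that assms(2) by auto
  then have "sum card M \<le> 2 * card M"
    using sum_bounded_above[of M card 2] by (simp add: mult.commute)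
  then show ?thesis using card_Union_le_sum_card[of M] by linarith
qed

lemma orientation_arc_edge: "orientation V E D \<Longrightarrow> (u, v) \<in> D \<Longrightarrow> {u, v} \<in> E"
  unfolding orientation_def by blast

lemma orientation_arc_iff: "orientation V E D \<Longrightarrow> {u, v} \<in> E \<Longrightarrow> (u, v) \<in> D \<longleftrightarrow> (v, u) \<notin> D"
  unfolding orientation_def by blast

lemma orientation_exists:
  assumes "sgraph V E"
  shows "\<exists>D. orientation V E D"
proof -
  define tail where "tail e = (SOME x. x \<in> e)" for e :: "'a set"
  define D where "D = {(u, v). {u, v} \<in> E \<and> u = tail {u, v}}"
  have tail: "tail {u, v} \<in> {u, v}" for u v unfolding tail_def by (rule someI[of _ u]) simp
  have "(u, v) \<in> D \<longleftrightarrow> (v, u) \<notin> D" if "{u, v} \<in> E" for u v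
  proof -
    have "u \<noteq> v" using sgraph_edgeE[OF assms that] by (metis doubleton_eq_iff)
    then show ?thesis using tail[of u v] that unfolding D_def by (auto simp: insert_commute)
  qed
  then have "orientation V E D" unfolding orientation_def D_def by auto
  then show ?thesis by blast
qed

definition reorient :: "'a set set \<Rightarrow> ('a \<times> 'a) set \<Rightarrow> ('a \<times> 'a) set" where
  "reorient M D = {(x, y). ((x, y) \<in> D \<and> {x, y} \<notin> M) \<or> ((y, x) \<in> D \<and> {x, y} \<in> M)}"

lemma reorient_empty [simp]: "reorient {} D = D"
  unfolding reorient_def by auto

lemma mem_reorient:
  "(x, y) \<in> reorient M D \<longleftrightarrow> ((x, y) \<in> D \<and> {x, y} \<notin> M) \<or> ((y, x) \<in> D \<and> {x, y} \<in> M)"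
  unfolding reorient_def by simp

lemma reorient_reorient: "A \<inter> B = {} \<Longrightarrow> reorient A (reorient B D) = reorient (A \<union> B) D"
  unfolding reorient_def by (auto simp: insert_commute)

lemma orientation_reorient:
  assumes "orientation V E D"
  shows "orientation V E (reorient M D)"
proof -
  have "{u, v} \<in> E" if "(u, v) \<in> reorient M D" for u v
    using that orientation_arc_edge[OF assms, of u v] orientation_arc_edge[OF assms, of v u]
    by (auto simp: mem_reorient insert_commute)
  moreover have "(u, v) \<in> reorient M D \<longleftrightarrow> (v, u) \<notin> reorient M D" if "{u, v} \<in> E" for u v
    using that orientation_arc_iff[OF assms, of u v] by (auto simp: mem_reorient insert_commute)
  ultimately show ?thesis unfolding orientation_def by blast
qed

lemma orientation_eq_reorient:
  assumes "orientation V E D1" "orientation V E D2"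
  shows "D2 = reorient {{u, v} | u v. (u, v) \<in> D1 - D2} D1"
proof -
  define F where "F = {{u, v} | u v. (u, v) \<in> D1 - D2}"
  have "(x, y) \<in> D2 \<longleftrightarrow> (x, y) \<in> reorient F D1" for x y
  proof (cases "{x, y} \<in> E")
    case True
    then have "x \<noteq> y" using orientation_arc_iff[OF assms(1)] by blast
    then have "{x, y} \<in> F \<longleftrightarrow> (x, y) \<in> D1 - D2 \<or> (y, x) \<in> D1 - D2"
      unfolding F_def by (auto simp: doubleton_eq_iff)
    then show ?thesis unfolding mem_reorient
      using orientation_arc_iff[OF assms(1) True] orientation_arc_iff[OF assms(2) True] by blast
  next
    case False
    moreover have "{y, x} \<notin> E" using False by (simp add: insert_commute)
    ultimately have "(x, y) \<notin> D1" "(y, x) \<notin> D1" "(x, y) \<notin> D2"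
      using orientation_arc_edge[OF assms(1)] orientation_arc_edge[OF assms(2)] by blast+
    then show ?thesis by (simp add: mem_reorient)
  qed
  then show ?thesis unfolding F_def[symmetric] by auto
qed

lemma mem_invert:
  "(x, y) \<in> invert X D \<longleftrightarrow> ((x, y) \<in> D \<and> \<not> (x \<in> X \<and> y \<in> X)) \<or> ((y, x) \<in> D \<and> x \<in> X \<and> y \<in> X)"
  unfolding invert_def by blast

lemma invert_seq_append: "invert_seq (Xs @ Ys) D = invert_seq Ys (invert_seq Xs D)"
  unfolding invert_seq_def by simp

lemma inv_dist_le_length:
  assumes "invert_seq Xs D1 = D2" "\<forall>X\<in>set Xs. X \<subseteq> V \<and> card X \<le> p"
  shows "inv_dist p V D1 D2 \<le> length Xs"
  unfolding inv_dist_def by (rule Least_le) (use assms in blast)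

lemma invert_Union_induced_matching:
  assumes "orientation V E D" "induced_matching E M"
  shows "invert (\<Union>M) D = reorient M D"
proof -
  have closed: "e \<in> M" if "e \<in> E" "e \<subseteq> \<Union>M" for e
    using assms(2) that unfolding induced_matching_def by blast
  have spanned: "(u \<in> \<Union>M \<and> v \<in> \<Union>M) \<longleftrightarrow> {u, v} \<in> M" if "(u, v) \<in> D" for u v
    using closed[OF orientation_arc_edge[OF assms(1) that]] by auto
  have "(x, y) \<in> invert (\<Union>M) D \<longleftrightarrow> (x, y) \<in> reorient M D" for x y
    using spanned[of x y] spanned[of y x] by (auto simp: mem_invert mem_reorient insert_commute)
  then show ?thesis by auto
qed

lemma induced_matching_subset:
  assumes "sgraph V E" "induced_matching E K" "M \<subseteq> K"
  shows "induced_matching E M"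
proof -
  have KE: "K \<subseteq> E"
    and disjoint: "\<And>e f. e \<in> K \<Longrightarrow> f \<in> K \<Longrightarrow> e \<noteq> f \<Longrightarrow> e \<inter> f = {}"
    and closed: "\<And>e. e \<in> E \<Longrightarrow> e \<subseteq> \<Union>K \<Longrightarrow> e \<in> K"
    using assms(2) unfolding induced_matching_def by auto
  have "e \<in> M" if e: "e \<in> E" "e \<subseteq> \<Union>M" for e
  proof -
    obtain x where "x \<in> e" using sgraph_edgeE[OF assms(1) e(1)] by blast
    then obtain f where "f \<in> M" "x \<in> f" using e(2) by blast
    moreover have "e \<in> K" using closed e assms(3) by blast
    ultimately show ?thesis using disjoint[of e f] \<open>x \<in> e\<close> assms(3) by blast
  qed
  with KE disjoint assms(3) show ?thesis unfolding induced_matching_def by blast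
qed

lemma induced_matching_subsingleton:
  assumes "sgraph V E" "K \<subseteq> E" "\<forall>e\<in>K. \<forall>f\<in>K. e = f"
  shows "induced_matching E K"
  unfolding induced_matching_def
proof (intro conjI ballI impI)
  fix e assume e: "e \<in> E" "e \<subseteq> \<Union>K"
  have "card e = 2" by (rule sgraph_card_edge[OF assms(1) e(1)])
  then obtain x where "x \<in> e" by fastforce
  then obtain f where f: "f \<in> K" "x \<in> f" using e(2) by blast
  then have "e \<subseteq> f" using e(2) assms(3) by blast
  moreover have "card f = 2" using sgraph_card_edge[OF assms(1)] f(1) assms(2) by blast
  ultimately have "e = f" using \<open>card e = 2\<close> card_subset_eq[of f e] card.infinite by fastforce
  then show "e \<in> K" using f(1) by simp
qed (use assms in auto)

lemma strong_edge_colouring_chromatic_index: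
  assumes "sgraph V E"
  shows "\<exists>c. strong_edge_colouring E (strong_chromatic_index E) c"
  unfolding strong_chromatic_index_def
proof (rule LeastI_ex)
  obtain h where h: "bij_betw h E {..<card E}"
    using ex_bij_betw_finite_nat sgraph_finite_edges[OF assms] atLeast0LessThan by metis
  have "induced_matching E {e \<in> E. h e = i}" for i
    by (rule induced_matching_subsingleton[OF assms]) (use h in \<open>auto simp: bij_betw_def inj_on_def\<close>)
  then have "strong_edge_colouring E (card E) h"
    using h unfolding strong_edge_colouring_def bij_betw_def by auto
  then show "\<exists>k c. strong_edge_colouring E k c" by blast
qed

lemma inversions_induced_matching:
  assumes "sgraph V E" "orientation V E D" "induced_matching E M" "q \<ge> 1"
  shows "\<exists>Xs. invert_seq Xs D = reorient M D \<and> (\<forall>X\<in>set Xs. X \<subseteq> V \<and> card X \<le> 2 * q)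
           \<and> length Xs * q \<le> card M + q"
  using assms(2,3)
proof (induction "card M" arbitrary: M D rule: less_induct)
  case less
  have ME: "M \<subseteq> E" using less.prems(2) unfolding induced_matching_def by blast
  have finM: "finite M" using ME sgraph_finite_edges[OF assms(1)] finite_subset by blast
  show ?case
  proof (cases "card M \<le> q")
    case True
    show ?thesis
    proof (intro exI[of _ "[\<Union>M]"] conjI)
      show "invert_seq [\<Union>M] D = reorient M D"
        using invert_Union_induced_matching[OF less.prems] by (simp add: invert_seq_def)
      show "\<forall>X\<in>set [\<Union>M]. X \<subseteq> V \<and> card X \<le> 2 * q"
        using sgraph_Union_edges[OF assms(1) ME] sgraph_card_Union_edges[OF assms(1) ME] True
        by simp
    qed simp
  next
    case False
    then obtain T where T: "T \<subseteq> M" "card T = q"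
      by (meson nat_le_linear obtain_subset_with_card_n)
    have TE: "T \<subseteq> E" using T ME by blast
    have "induced_matching E T" "induced_matching E (M - T)"
      using induced_matching_subset[OF assms(1) less.prems(2)] T by auto
    have D': "invert (\<Union>T) D = reorient T D" "orientation V E (reorient T D)"
      using invert_Union_induced_matching[OF less.prems(1) \<open>induced_matching E T\<close>]
        orientation_reorient[OF less.prems(1)] by auto
    have card_rest: "card (M - T) = card M - q" using T finM by (simp add: card_Diff_subset finite_subset)
    then obtain Ys where Ys: "invert_seq Ys (reorient T D) = reorient (M - T) (reorient T D)"
        "\<forall>X\<in>set Ys. X \<subseteq> V \<and> card X \<le> 2 * q" "length Ys * q \<le> card (M - T) + q"
      using less.hyps[OF _ D'(2) \<open>induced_matching E (M - T)\<close>] False assms(4) by auto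
    show ?thesis
    proof (intro exI[of _ "\<Union>T # Ys"] conjI)
      have "reorient (M - T) (reorient T D) = reorient M D"
        using reorient_reorient[of "M - T" T D] T(1) by (simp add: Diff_disjoint Un_absorb2 Int_commute)
      then show "invert_seq (\<Union>T # Ys) D = reorient M D"
        using Ys(1) D'(1) by (simp add: invert_seq_def)
      show "\<forall>X\<in>set (\<Union>T # Ys). X \<subseteq> V \<and> card X \<le> 2 * q"
        using Ys(2) sgraph_Union_edges[OF assms(1) TE] sgraph_card_Union_edges[OF assms(1) TE] T(2)
        by simp
      show "length (\<Union>T # Ys) * q \<le> card M + q"
        using Ys(3) card_rest False by simp
    qed
  qed
qed

lemma inversions_strong_edge_colouring:
  assumes "sgraph V E" "orientation V E D" "strong_edge_colouring E k c" "F \<subseteq> E" "q \<ge> 1"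
  shows "\<exists>Xs. invert_seq Xs D = reorient F D \<and> (\<forall>X\<in>set Xs. X \<subseteq> V \<and> card X \<le> 2 * q)
           \<and> length Xs * q \<le> card F + k * q"
proof -
  have finF: "finite F" using assms(4) sgraph_finite_edges[OF assms(1)] finite_subset by blast
  have "\<exists>Xs. invert_seq Xs D = reorient {e \<in> F. c e < j} D
           \<and> (\<forall>X\<in>set Xs. X \<subseteq> V \<and> card X \<le> 2 * q)
           \<and> length Xs * q \<le> card {e \<in> F. c e < j} + j * q" if "j \<le> k" for j
    using that
  proof (induction j)
    case 0
    show ?case by (intro exI[of _ "[]"]) (simp add: invert_seq_def)
  next
    case (Suc j)
    let ?C = "{e \<in> F. c e = j}" and ?Fj = "{e \<in> F. c e < j}"
    obtain Xs where Xs: "invert_seq Xs D = reorient ?Fj D"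
        "\<forall>X\<in>set Xs. X \<subseteq> V \<and> card X \<le> 2 * q" "length Xs * q \<le> card ?Fj + j * q"
      using Suc by auto
    have "induced_matching E {e \<in> E. c e = j}"
      using assms(3) Suc.prems unfolding strong_edge_colouring_def by simp
    then have "induced_matching E ?C"
      by (rule induced_matching_subset[OF assms(1)]) (use assms(4) in blast)
    then obtain Ys where Ys: "invert_seq Ys (reorient ?Fj D) = reorient ?C (reorient ?Fj D)"
        "\<forall>X\<in>set Ys. X \<subseteq> V \<and> card X \<le> 2 * q" "length Ys * q \<le> card ?C + q"
      using inversions_induced_matching[OF assms(1) orientation_reorient[OF assms(2)] _ assms(5)]
      by blast
    have split: "{e \<in> F. c e < Suc j} = ?C \<union> ?Fj" by auto
    have "reorient ?C (reorient ?Fj D) = reorient {e \<in> F. c e < Suc j} D"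
      unfolding split by (rule reorient_reorient) auto
    moreover have "card {e \<in> F. c e < Suc j} = card ?C + card ?Fj"
      unfolding split by (rule card_Un_disjoint) (use finF in auto)
    ultimately show ?case using Xs Ys
      by (intro exI[of _ "Xs @ Ys"]) (auto simp: invert_seq_append add_mult_distrib)
  qed
  moreover have "{e \<in> F. c e < k} = F"
    using assms(3,4) unfolding strong_edge_colouring_def by blast
  ultimately show ?thesis by (metis order_refl)
qed

lemma inv_dist_strong_edge_colouring:
  assumes "sgraph V E" "p \<ge> 2" "orientation V E D1" "orientation V E D2"
    "strong_edge_colouring E k c"
  shows "inv_dist p V D1 D2 * (p div 2) \<le> card E + k * (p div 2)"
proof -
  define q where "q = p div 2"
  define F where "F = {{u, v} | u v. (u, v) \<in> D1 - D2}"
  have "F \<subseteq> E" unfolding F_def using orientation_arc_edge[OF assms(3)] by auto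
  moreover have "q \<ge> 1" "2 * q \<le> p" using assms(2) unfolding q_def by auto
  ultimately obtain Xs where Xs: "invert_seq Xs D1 = reorient F D1"
      "\<forall>X\<in>set Xs. X \<subseteq> V \<and> card X \<le> 2 * q" "length Xs * q \<le> card F + k * q"
    using inversions_strong_edge_colouring[OF assms(1,3,5)] by blast
  have "invert_seq Xs D1 = D2"
    using Xs(1) orientation_eq_reorient[OF assms(3,4)] unfolding F_def by simp
  moreover have "\<forall>X\<in>set Xs. X \<subseteq> V \<and> card X \<le> p" using Xs(2) \<open>2 * q \<le> p\<close> by auto
  ultimately have "inv_dist p V D1 D2 * q \<le> length Xs * q"
    by (intro mult_right_mono inv_dist_le_length) simp_all
  also have "\<dots> \<le> card F + k * q" by (rule Xs(3))
  also have "\<dots> \<le> card E + k * q"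
    using card_mono[OF sgraph_finite_edges[OF assms(1)] \<open>F \<subseteq> E\<close>] by simp
  finally show ?thesis unfolding q_def .
qed

lemma inv_diam_le:
  assumes "sgraph V E"
    and "\<And>D1 D2. orientation V E D1 \<Longrightarrow> orientation V E D2 \<Longrightarrow> inv_dist p V D1 D2 \<le> b"
  shows "inv_diam p V E \<le> b"
proof -
  let ?S = "{inv_dist p V D1 D2 | D1 D2. orientation V E D1 \<and> orientation V E D2}"
  have "?S \<subseteq> {..b}" using assms(2) by auto
  then have "finite ?S" by (rule finite_subset) simp
  moreover have "?S \<noteq> {}" using orientation_exists[OF assms(1)] by blast
  ultimately show ?thesis unfolding inv_diam_def using \<open>?S \<subseteq> {..b}\<close> by (simp add: subset_eq)
qed

theorem mainTheorem14:
  fixes V :: "'a set" and E :: "'a set set" and p :: nat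
  assumes "sgraph V E" and "p \<ge> 2"
  shows "real (inv_diam p V E)
           \<le> real (card E) / real (p div 2) + real (strong_chromatic_index E)"
proof -
  define k where "k = strong_chromatic_index E"
  define q where "q = p div 2"
  have "q > 0" using assms(2) unfolding q_def by simp
  obtain c where c: "strong_edge_colouring E k c"
    using strong_edge_colouring_chromatic_index[OF assms(1)] unfolding k_def ..
  have "inv_diam p V E \<le> (card E + k * q) div q"
  proof (rule inv_diam_le[OF assms(1)])
    fix D1 D2 assume "orientation V E D1" "orientation V E D2"
    then have "inv_dist p V D1 D2 * q \<le> card E + k * q"
      using inv_dist_strong_edge_colouring[OF assms _ _ c] unfolding q_def by blast
    then show "inv_dist p V D1 D2 \<le> (card E + k * q) div q"
      by (simp only: less_eq_div_iff_mult_less_eq[OF \<open>q > 0\<close>])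
  qed
  then have "real (inv_diam p V E) \<le> real (card E + k * q) / real q"
    using of_nat_div_le_of_nat order_trans of_nat_mono by blast
  also have "\<dots> = real (card E) / real q + real k"
    using \<open>q > 0\<close> by (simp add: field_simps)
  finally show ?thesis unfolding k_def q_def .
qed

end
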